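(* Let $n\ge2$ be an integer and $a>1$. Define $$F_n(t)=\sum_{j>E_{n-1}}\frac{\exp\big(i t\, j^2\,\mathrm{Log}_1 j\cdots\mathrm{Log}_{n-1}j\cdot(\mathrm{Log}_n j)^a\big)}{j\,\mathrm{Log}_1 j\cdots\mathrm{Log}_{n-1}j\cdot(\mathrm{Log}_n j)^a},\qquad t\in\mathbb{R},$$ the sum running over integers $j>E_{n-1}$. Then $F_n$, $\operatorname{Re}F_n$ and $\operatorname{Im}F_n$ are continuous on $\mathbb{R}$ but differentiable at no point of $\mathbb{R}$. (For $n=2$ this is $F_2(t)=\sum_{j\ge3}\exp(it j^2\log j(\log\log j)^a)/(j\log j(\log\log j)^a)$.)
   Context: $\mathrm{Log}_1=\log$ and $\mathrm{Log}_k=\log\circ\mathrm{Log}_{k-1}$ is the $k$-fold iterated natural logarithm. $E_0=1$ and $E_k=\exp(E_{k-1})$, so $E_1=e$, $E_2=e^e$, etc.; $\mathrm{Log}_k t$ is defined and positive for $t>E_{k-1}$. *)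

theory Defs
  imports "HOL-Analysis.Analysis"
begin

primrec iterlog :: "nat \<Rightarrow> real \<Rightarrow> real" where
  "iterlog 0 x = x"
| "iterlog (Suc k) x = ln (iterlog k x)"

primrec Etow :: "nat \<Rightarrow> real" where
  "Etow 0 = 1"
| "Etow (Suc k) = exp (Etow k)"

definition logweight :: "nat \<Rightarrow> real \<Rightarrow> real \<Rightarrow> real" where
  "logweight n a x = (\<Prod>k\<in>{1..n-1}. iterlog k x) * (iterlog n x powr a)"

definition Fser :: "nat \<Rightarrow> real \<Rightarrow> real \<Rightarrow> complex" where
  "Fser n a t = infsum (\<lambda>j::nat.
      cis (t * (real j)^2 * logweight n a (real j)) / complex_of_real (real j * logweight n a (real j)))
      {j. real j > Etow (n - 1)}"

end

theory Submission
  imports Defs "HOL-Real_Asymp.Real_Asymp"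
begin

text \<open>
  Both \<open>Re F\<^sub>n\<close> and \<open>Im F\<^sub>n\<close> are cosine series \<open>\<Sum> c\<^sub>j cos (\<lambda>\<^sub>j t + \<phi>)\<close> with
  \<open>c\<^sub>j = 1/u\<^sub>j\<close>, \<open>u\<^sub>j = j Log\<^sub>1 j \<cdots> (Log\<^sub>n j)\<^sup>a\<close> and \<open>\<lambda>\<^sub>j = j u\<^sub>j\<close>; the coefficients are summable
  by the integral test, which gives continuity. If such a series \<open>f\<close> were differentiable at
  \<open>t\<^sub>0\<close>, integrate \<open>f(t\<^sub>0 + s)\<close> against \<open>(d - |s|) cos (\<lambda>\<^sub>k s + \<dots>)\<close> over \<open>[-d, d]\<close> with
  \<open>\<lambda>\<^sub>k d \<in> 2\<pi>\<nat>\<close>: the first order Taylor polynomial integrates to zero, the remainder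
  contributes \<open>o(d\<^sup>3)\<close>, the \<open>k\<close>-th term contributes \<open>c\<^sub>k d\<^sup>2/2\<close> and the \<open>j\<close>-th term at most
  \<open>4 c\<^sub>j / (\<lambda>\<^sub>j - \<lambda>\<^sub>k)\<^sup>2\<close>. The frequency gaps \<open>|\<lambda>\<^sub>j - \<lambda>\<^sub>k| \<ge> |j - k| min u\<^sub>j u\<^sub>k\<close> and the
  doubling property of \<open>u\<close> bound all the other terms by \<open>O(c\<^sub>k\<^sup>3)\<close>, so the choice
  \<open>d = 2\<pi>M c\<^sub>k\<close> with a large integer \<open>M\<close> yields \<open>M\<^sup>2 c\<^sub>k\<^sup>3 = O(c\<^sub>k\<^sup>3)\<close>, a contradiction.
\<close>

section \<open>Towers and iterated logarithms\<close>

lemma Etow_ge_1: "Etow k \<ge> 1"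
  by (induction k) (auto intro: order_trans[OF _ exp_ge_add_one_self])

lemma Etow_less_Suc: "Etow k < Etow (Suc k)"
  by (simp add: exp_gt_self)

lemma iterlog_gt_Etow: "x > Etow m \<Longrightarrow> k \<le> m \<Longrightarrow> iterlog k x > Etow (m - k)"
proof (induction k)
  case (Suc k)
  then have "iterlog k x > exp (Etow (m - Suc k))"
    using Suc_diff_Suc[of k m, symmetric] by simp
  then show ?case
    by (metis exp_gt_zero exp_less_cancel_iff exp_ln order.strict_trans iterlog.simps(2))
qed simp

lemma iterlog_ge_Etow: "x \<ge> Etow m \<Longrightarrow> k \<le> m \<Longrightarrow> iterlog k x \<ge> Etow (m - k)"
proof (induction k)
  case (Suc k)
  then have "iterlog k x \<ge> exp (Etow (m - Suc k))"
    using Suc_diff_Suc[of k m, symmetric] by simp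
  then show ?case
    by (metis exp_gt_zero exp_le_cancel_iff exp_ln order.strict_trans2 iterlog.simps(2))
qed simp

lemma iterlog_pos: "x > Etow m \<Longrightarrow> k \<le> Suc m \<Longrightarrow> iterlog k x > 0"
proof (cases "k = Suc m")
  case True
  assume "x > Etow m"
  then have "iterlog m x > 1"
    using iterlog_gt_Etow[of m x m] by simp
  with True show ?thesis by simp
next
  case False
  assume "x > Etow m" "k \<le> Suc m"
  with False have "iterlog k x > Etow (m - k)"
    using iterlog_gt_Etow by simp
  then show ?thesis
    using Etow_ge_1[of "m - k"] by linarith
qed

lemma iterlog_mono: "x > Etow m \<Longrightarrow> x \<le> y \<Longrightarrow> k \<le> Suc m \<Longrightarrow> iterlog k x \<le> iterlog k y"
proof (induction k)
  case (Suc k)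
  then show ?case
    using iterlog_pos[of m x k] by simp
qed simp

lemma iterlog_le_ln: "x > Etow m \<Longrightarrow> 1 \<le> k \<Longrightarrow> k \<le> Suc m \<Longrightarrow> iterlog k x \<le> ln x"
proof (induction k)
  case (Suc k)
  show ?case
  proof (cases "k = 0")
    case False
    with Suc have "iterlog k x \<le> ln x" "iterlog k x > 0"
      using iterlog_pos by simp_all
    then show ?thesis
      using ln_le_minus_one[of "iterlog k x"] by simp
  qed simp
qed simp

lemma iterlog_double_le:
  assumes y: "y \<ge> Etow m" and k: "1 \<le> k" "k \<le> m"
  shows "iterlog k (2 * y) \<le> iterlog k y + ln 2"
  using k
proof (induction k)
  case (Suc k)
  have y_pos: "y > 0"
    using y Etow_ge_1[of m] by linarith
  show ?case
  proof (cases "k = 0")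
    case True
    with y_pos show ?thesis by (simp add: ln_mult)
  next
    case False
    with Suc have IH: "iterlog k (2 * y) \<le> iterlog k y + ln 2" by simp
    have "iterlog k y \<ge> Etow (m - k)"
      using iterlog_ge_Etow[OF y] Suc by simp
    then have ge_1: "iterlog k y \<ge> 1"
      using Etow_ge_1[of "m - k"] by linarith
    have "y > Etow (m - 1)"
      using y Etow_less_Suc[of "m - 1"] Suc by simp
    then have "iterlog k y \<le> iterlog k (2 * y)"
      using iterlog_mono[of "m - 1" y "2 * y" k] y_pos Suc by simp
    moreover have "ln (2::real) \<le> 1"
      using ln_le_minus_one[of 2] by simp
    ultimately have "ln (iterlog k (2 * y)) \<le> ln (2 * iterlog k y)"
      using IH ge_1 by (intro ln_mono) auto
    also have "\<dots> = ln 2 + ln (iterlog k y)"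
      using ge_1 by (simp add: ln_mult)
    finally show ?thesis by simp
  qed
qed simp

lemma has_real_derivative_iterlog:
  assumes x: "x > Etow m" and k: "k \<le> Suc m"
  shows "(iterlog k has_real_derivative 1 / (\<Prod>i<k. iterlog i x)) (at x)"
  using k
proof (induction k)
  case 0
  have "iterlog 0 = (\<lambda>x. x)" by auto
  then show ?case by simp
next
  case (Suc k)
  have "iterlog (Suc k) = (\<lambda>x. ln (iterlog k x))" by auto
  moreover have "iterlog k x > 0"
    using iterlog_pos[OF x] Suc by simp
  ultimately show ?case
    using DERIV_chain2[OF DERIV_ln_divide Suc.IH] Suc by (simp add: field_simps)
qed

section \<open>A Fejer kernel test for cosine series\<close>

lemma has_integral_of_real_derivative:
  fixes F f :: "real \<Rightarrow> real"
  assumes "a \<le> b" and "\<And>x. (F has_real_derivative f x) (at x)"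
  shows "(f has_integral (F b - F a)) {a..b}"
  using assms
  by (intro fundamental_theorem_of_calculus)
     (auto simp: has_real_derivative_iff_has_vector_derivative[symmetric] intro: has_field_derivative_at_within)

lemma has_real_derivative_remainder_le:
  fixes g :: "real \<Rightarrow> real"
  assumes D: "(g has_real_derivative D) (at t)" and e: "e > 0"
  obtains d where "d > 0" "\<And>s. \<bar>s\<bar> \<le> d \<Longrightarrow> \<bar>g (t + s) - g t - D * s\<bar> \<le> e * \<bar>s\<bar>"
proof -
  have "((\<lambda>y. (g y - g t) / (y - t)) \<longlongrightarrow> D) (at t)"
    using D has_field_derivative_iff by blast
  from LIM_D[OF this e] obtain r where r: "r > 0"
    "\<And>y. y \<noteq> t \<and> norm (y - t) < r \<longrightarrow> norm ((g y - g t) / (y - t) - D) < e" by blast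
  have "\<bar>g (t + s) - g t - D * s\<bar> \<le> e * \<bar>s\<bar>" if s: "\<bar>s\<bar> \<le> r / 2" for s
  proof (cases "s = 0")
    case False
    have "\<bar>(g (t + s) - g t) / s - D\<bar> < e"
      using r(2)[of "t + s"] s r(1) False by simp
    moreover have "g (t + s) - g t - D * s = s * ((g (t + s) - g t) / s - D)"
      using False by (simp add: field_simps)
    ultimately show ?thesis
      using mult_left_mono[of "\<bar>(g (t + s) - g t) / s - D\<bar>" e "\<bar>s\<bar>"] by (simp add: abs_mult mult.commute)
  qed simp
  with r(1) show ?thesis
    using that[of "r / 2"] by simp
qed

text \<open>\<open>tri_cos_integral d \<alpha> \<beta>\<close> is \<open>\<integral>\<^bsub>-d\<^esub>\<^sup>d (d - |s|) cos (\<alpha> s + \<beta>) ds\<close>.\<close>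

definition tri_cos_integral :: "real \<Rightarrow> real \<Rightarrow> real \<Rightarrow> real" where
  "tri_cos_integral d \<alpha> \<beta> =
     (if \<alpha> = 0 then d\<^sup>2 * cos \<beta> else 2 * cos \<beta> * (1 - cos (\<alpha> * d)) / \<alpha>\<^sup>2)"

lemma has_integral_tri_cos:
  assumes d: "d \<ge> 0"
  shows "((\<lambda>s. (d - s) * (cos (\<alpha> * s + \<beta>) + cos (\<alpha> * - s + \<beta>))) has_integral tri_cos_integral d \<alpha> \<beta>) {0..d}"
proof (cases "\<alpha> = 0")
  case True
  define H where "H s = (d * s - s\<^sup>2 / 2) * (2 * cos \<beta>)" for s
  have "(H has_real_derivative (d - s) * (cos (\<alpha> * s + \<beta>) + cos (\<alpha> * - s + \<beta>))) (at s)" for s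
    unfolding H_def using True by (auto intro!: derivative_eq_intros simp: algebra_simps)
  from has_integral_of_real_derivative[OF d this] show ?thesis
    using True unfolding H_def tri_cos_integral_def by (simp add: power2_eq_square algebra_simps)
next
  case False
  define H where "H s = (d - s) * (sin (\<alpha> * s + \<beta>) - sin (\<alpha> * - s + \<beta>)) / \<alpha>
      - (cos (\<alpha> * s + \<beta>) + cos (\<alpha> * - s + \<beta>)) / \<alpha>\<^sup>2" for s
  have "(H has_real_derivative (d - s) * (cos (\<alpha> * s + \<beta>) + cos (\<alpha> * - s + \<beta>))) (at s)" for s
    unfolding H_def using False
    by (auto intro!: derivative_eq_intros simp: field_simps power2_eq_square)
  from has_integral_of_real_derivative[OF d this]
  have "((\<lambda>s. (d - s) * (cos (\<alpha> * s + \<beta>) + cos (\<alpha> * - s + \<beta>))) has_integral H d - H 0) {0..d}" .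
  moreover have "cos (\<alpha> * d + \<beta>) + cos (\<alpha> * - d + \<beta>) = 2 * cos \<beta> * cos (\<alpha> * d)"
    by (simp add: cos_add cos_diff)
  then have "H d - H 0 = tri_cos_integral d \<alpha> \<beta>"
    unfolding H_def tri_cos_integral_def using False by (simp add: field_simps power2_eq_square)
  ultimately show ?thesis by simp
qed

lemma abs_tri_cos_integral_le: "\<alpha> \<noteq> 0 \<Longrightarrow> \<bar>tri_cos_integral d \<alpha> \<beta>\<bar> \<le> 4 / \<alpha>\<^sup>2"
proof -
  assume "\<alpha> \<noteq> 0"
  have "\<bar>cos \<beta>\<bar> * \<bar>1 - cos (\<alpha> * d)\<bar> \<le> 1 * 2"
    using cos_ge_minus_one[of "\<alpha> * d"] cos_le_one[of "\<alpha> * d"] by (intro mult_mono) auto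
  with \<open>\<alpha> \<noteq> 0\<close> show ?thesis
    unfolding tri_cos_integral_def by (simp add: abs_mult divide_right_mono)
qed

lemma tri_cos_integral_eq_0:
  "\<alpha> \<noteq> 0 \<Longrightarrow> \<alpha> * d = 2 * pi * real N \<Longrightarrow> tri_cos_integral d \<alpha> \<beta> = 0"
  using cos_2npi[of N] unfolding tri_cos_integral_def by (simp add: mult.commute mult.left_commute)

lemma has_integral_tri_sin_0:
  assumes d: "d \<ge> 0" and l: "l \<noteq> 0" and period: "l * d = 2 * pi * real N"
  shows "((\<lambda>s. (d - s) * s * (cos (l * s + p) - cos (l * - s + p))) has_integral 0) {0..d}"
proof -
  define K where "K s = -2 * sin p * (- s * (d - s) * cos (l * s) / l + (d - 2 * s) * sin (l * s) / l\<^sup>2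
      - 2 * cos (l * s) / l ^ 3)" for s
  have "(K has_real_derivative (d - s) * s * (-2 * sin (l * s) * sin p)) (at s)" for s
    unfolding K_def using l
    by (auto intro!: derivative_eq_intros simp: field_simps power2_eq_square power3_eq_cube)
  from has_integral_of_real_derivative[OF d this]
  have "((\<lambda>s. (d - s) * s * (-2 * sin (l * s) * sin p)) has_integral K d - K 0) {0..d}" .
  moreover have "sin (2 * pi * real N) = 0" "cos (2 * pi * real N) = 1"
    using sin_npi[of "2 * N"] cos_2npi[of N] by (simp_all add: mult.commute mult.left_commute)
  then have "K d - K 0 = 0"
    unfolding K_def using period l by (simp add: field_simps power3_eq_cube)
  moreover have "-2 * sin (l * s) * sin p = cos (l * s + p) - cos (l * - s + p)" for s
    by (simp add: cos_add cos_diff)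
  ultimately show ?thesis by (simp only:)
qed

lemma has_integral_tri_le:
  fixes d e J :: real
  assumes d: "d \<ge> 0" and g: "(g has_integral J) {0..d}"
    and bound: "\<And>s. s \<in> {0..d} \<Longrightarrow> \<bar>g s\<bar> \<le> 2 * e * ((d - s) * s)"
  shows "\<bar>J\<bar> \<le> e * d ^ 3 / 3"
proof -
  define K where "K s = e * (d * s\<^sup>2 - 2 * s ^ 3 / 3)" for s
  have "(K has_real_derivative 2 * e * ((d - s) * s)) (at s)" for s
    unfolding K_def by (auto intro!: derivative_eq_intros simp: field_simps power2_eq_square)
  from has_integral_of_real_derivative[OF d this]
  have P: "((\<lambda>s. 2 * e * ((d - s) * s)) has_integral e * d ^ 3 / 3) {0..d}"
    unfolding K_def by (simp add: field_simps power2_eq_square power3_eq_cube)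
  have "J \<le> e * d ^ 3 / 3" "- J \<le> e * d ^ 3 / 3"
    using has_integral_le[OF g P] has_integral_le[OF has_integral_neg[OF g] P] bound
    by (auto simp: abs_le_iff)
  then show ?thesis by linarith
qed

lemma cos_mult_cos_linear:
  "cos (a1 * s + b1) * cos (a2 * s + b2)
     = (cos ((a1 - a2) * s + (b1 - b2)) + cos ((a1 + a2) * s + (b1 + b2))) / (2::real)"
proof -
  have "a1 * s + b1 - (a2 * s + b2) = (a1 - a2) * s + (b1 - b2)"
    "a1 * s + b1 + (a2 * s + b2) = (a1 + a2) * s + (b1 + b2)"
    by (simp_all add: algebra_simps)
  then show ?thesis by (simp only: cos_times_cos)
qed


lemma has_integral_tri_cos_product:
  assumes d: "d \<ge> 0"
  shows "((\<lambda>s. (d - s) * (cos (l * s + p) * cos (\<mu> * s + q) + cos (l * - s + p) * cos (\<mu> * - s + q)))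
    has_integral (tri_cos_integral d (l - \<mu>) (p - q) + tri_cos_integral d (l + \<mu>) (p + q)) / 2) {0..d}"
proof -
  have "(\<lambda>s. (d - s) * (cos (l * s + p) * cos (\<mu> * s + q) + cos (l * - s + p) * cos (\<mu> * - s + q)))
      = (\<lambda>s. (d - s) * (cos ((l - \<mu>) * s + (p - q)) + cos ((l - \<mu>) * - s + (p - q))) / 2
        + (d - s) * (cos ((l + \<mu>) * s + (p + q)) + cos ((l + \<mu>) * - s + (p + q))) / 2)"
    unfolding cos_mult_cos_linear by (intro ext) (simp add: field_simps)
  then show ?thesis
    unfolding add_divide_distrib
    by (simp only:) (intro has_integral_add has_integral_divide has_integral_tri_cos d)
qed

lemma has_integral_suminf_dominated:
  fixes g :: "nat \<Rightarrow> real \<Rightarrow> real"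
  assumes integral: "\<And>j. (g j has_integral Q j) {a..b}" and cont: "\<And>j. continuous_on {a..b} (g j)"
    and dominated: "\<And>j s. s \<in> {a..b} \<Longrightarrow> \<bar>g j s\<bar> \<le> M j" and M: "summable M"
  obtains I where "Q sums I" "((\<lambda>s. \<Sum>j. g j s) has_integral I) {a..b}"
proof -
  have lim: "uniform_limit {a..b} (\<lambda>n s. \<Sum>j<n. g j s) (\<lambda>s. \<Sum>j. g j s) sequentially"
    using dominated by (intro Weierstrass_m_test[OF _ M]) auto
  have "continuous_on {a..b} (\<lambda>s. \<Sum>j<n. g j s)" for n
    using cont by (intro continuous_on_sum) auto
  then obtain I J where I: "\<And>n. ((\<lambda>s. \<Sum>j<n. g j s) has_integral I n) {a..b}"
    and J: "((\<lambda>s. \<Sum>j. g j s) has_integral J) {a..b}" and IJ: "I \<longlonglongrightarrow> J"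
    using uniform_limit_integral[OF lim] by auto
  have "I n = (\<Sum>j<n. Q j)" for n
    using has_integral_unique[OF I[of n] has_integral_sum[OF _ integral]] by simp
  then have "I = (\<lambda>n. \<Sum>j<n. Q j)" ..
  with IJ have "Q sums J"
    unfolding sums_def by simp
  with J show ?thesis
    using that by blast
qed

lemma has_integral_tri_cos_series:
  fixes c l p :: "nat \<Rightarrow> real" and f :: "real \<Rightarrow> real"
  assumes c0: "\<And>j. c j \<ge> 0" and cs: "summable c" and d: "d \<ge> 0"
    and f: "\<And>s. f s = (\<Sum>j. c j * cos (l j * s + p j))"
  obtains I where
    "(\<lambda>j. c j * ((tri_cos_integral d (l j - \<mu>) (p j - q) + tri_cos_integral d (l j + \<mu>) (p j + q)) / 2))
       sums I"
    "((\<lambda>s. (d - s) * (f s * cos (\<mu> * s + q) + f (- s) * cos (\<mu> * - s + q))) has_integral I) {0..d}"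
proof -
  define \<psi> where "\<psi> j s = (d - s) * (cos (l j * s + p j) * cos (\<mu> * s + q)
      + cos (l j * - s + p j) * cos (\<mu> * - s + q))" for j s
  define Q where "Q j = (tri_cos_integral d (l j - \<mu>) (p j - q) + tri_cos_integral d (l j + \<mu>) (p j + q)) / 2"
    for j
  have integral: "((\<lambda>s. c j * \<psi> j s) has_integral c j * Q j) {0..d}" for j
    unfolding \<psi>_def Q_def by (intro has_integral_mult_right has_integral_tri_cos_product d)
  have cont: "continuous_on {0..d} (\<lambda>s. c j * \<psi> j s)" for j
    unfolding \<psi>_def by (intro continuous_intros)
  have dominated: "\<bar>c j * \<psi> j s\<bar> \<le> c j * (2 * d)" if "s \<in> {0..d}" for j s
  proof -
    have "\<bar>cos (l j * s + p j) * cos (\<mu> * s + q)\<bar> \<le> 1" "\<bar>cos (l j * - s + p j) * cos (\<mu> * - s + q)\<bar> \<le> 1"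
      by (auto simp: abs_mult intro!: mult_le_one)
    then have "\<bar>cos (l j * s + p j) * cos (\<mu> * s + q) + cos (l j * - s + p j) * cos (\<mu> * - s + q)\<bar> \<le> 2"
      by linarith
    moreover have "\<bar>d - s\<bar> \<le> d" using that by auto
    ultimately have "\<bar>\<psi> j s\<bar> \<le> d * 2"
      unfolding \<psi>_def abs_mult by (intro mult_mono) auto
    then show ?thesis
      using c0[of j] by (simp add: abs_mult mult_left_mono)
  qed
  obtain I where sums: "(\<lambda>j. c j * Q j) sums I"
    and series_integral: "((\<lambda>s. \<Sum>j. c j * \<psi> j s) has_integral I) {0..d}"
    by (rule has_integral_suminf_dominated[OF integral cont dominated summable_mult2[OF cs]])
  have summable: "summable (\<lambda>j. c j * cos (l j * x + p j))" for x
    by (rule summable_comparison_test[OF _ cs])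
      (auto simp: abs_mult c0 intro!: exI[of _ 0] mult_right_le_one_le)
  have "(\<Sum>j. c j * \<psi> j s) = (d - s) * (f s * cos (\<mu> * s + q) + f (- s) * cos (\<mu> * - s + q))" for s
  proof -
    have "(\<lambda>j. c j * \<psi> j s) = (\<lambda>j. ((d - s) * cos (\<mu> * s + q)) * (c j * cos (l j * s + p j))
        + ((d - s) * cos (\<mu> * - s + q)) * (c j * cos (l j * - s + p j)))"
      unfolding \<psi>_def by (rule ext) (simp add: algebra_simps)
    then have "(\<Sum>j. c j * \<psi> j s) = ((d - s) * cos (\<mu> * s + q)) * (\<Sum>j. c j * cos (l j * s + p j))
        + ((d - s) * cos (\<mu> * - s + q)) * (\<Sum>j. c j * cos (l j * - s + p j))"
      by (simp only: suminf_add[OF summable_mult summable_mult, OF summable summable, symmetric]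
          suminf_mult[OF summable])
    then show ?thesis
      using f[of s] f[of "- s"] by (simp add: algebra_simps)
  qed
  with sums series_integral show ?thesis
    using that unfolding Q_def by simp
qed

lemma abs_tri_cos_pair_le:
  assumes "l \<ge> 0" "\<mu> > 0" "l \<noteq> \<mu>"
  shows "\<bar>(tri_cos_integral d (l - \<mu>) \<beta> + tri_cos_integral d (l + \<mu>) \<gamma>) / 2\<bar> \<le> 4 / (l - \<mu>)\<^sup>2"
proof -
  have "(l - \<mu>)\<^sup>2 \<le> (l + \<mu>)\<^sup>2"
    using assms by (simp add: power2_eq_square algebra_simps)
  then have "4 / (l + \<mu>)\<^sup>2 \<le> 4 / (l - \<mu>)\<^sup>2"
    using assms by (intro divide_left_mono) auto
  then have "\<bar>tri_cos_integral d (l + \<mu>) \<gamma>\<bar> \<le> 4 / (l - \<mu>)\<^sup>2"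
    using abs_tri_cos_integral_le[of "l + \<mu>" d \<gamma>] assms by simp
  then show ?thesis
    using abs_tri_cos_integral_le[of "l - \<mu>" d \<beta>] assms by (simp add: abs_le_iff)
qed

lemma has_integral_tri_linear_0:
  assumes d: "d \<ge> 0" and \<mu>: "\<mu> \<noteq> 0" and period: "\<mu> * d = 2 * pi * real N"
  shows "((\<lambda>s. (d - s) * ((A + D * s) * cos (\<mu> * s + q) + (A + D * - s) * cos (\<mu> * - s + q)))
    has_integral 0) {0..d}"
proof -
  have "((\<lambda>s. A * ((d - s) * (cos (\<mu> * s + q) + cos (\<mu> * - s + q)))) has_integral 0) {0..d}"
    using has_integral_mult_right[OF has_integral_tri_cos[OF d, of \<mu> q], of A]
      tri_cos_integral_eq_0[OF \<mu> period, of q]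
    by simp
  from has_integral_add[OF this has_integral_mult_right[OF has_integral_tri_sin_0[OF d \<mu> period], of D]]
  have "((\<lambda>s. A * ((d - s) * (cos (\<mu> * s + q) + cos (\<mu> * - s + q)))
      + D * ((d - s) * s * (cos (\<mu> * s + q) - cos (\<mu> * - s + q)))) has_integral 0) {0..d}"
    by simp
  moreover have "(\<lambda>s. A * ((d - s) * (cos (\<mu> * s + q) + cos (\<mu> * - s + q)))
      + D * ((d - s) * s * (cos (\<mu> * s + q) - cos (\<mu> * - s + q))))
      = (\<lambda>s. (d - s) * ((A + D * s) * cos (\<mu> * s + q) + (A + D * - s) * cos (\<mu> * - s + q)))"
    by (intro ext) (simp add: algebra_simps)
  ultimately show ?thesis by simp
qed

lemma abs_sums_minus_term_le:
  fixes g B :: "nat \<Rightarrow> real"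
  assumes g: "g sums J" and B: "summable B" "\<And>j. B j \<ge> 0"
    and bound: "\<And>j. j \<noteq> k \<Longrightarrow> \<bar>g j\<bar> \<le> B j"
  shows "\<bar>J - g k\<bar> \<le> suminf B"
proof -
  define R where "R j = (if j = k then 0 else g j)" for j
  have "(\<lambda>j. g j - (if j = k then g j else 0)) sums (J - g k)"
    by (intro sums_diff g sums_single)
  moreover have "(\<lambda>j. g j - (if j = k then g j else 0)) = R"
    unfolding R_def by auto
  ultimately have R_sums: "R sums (J - g k)" by simp
  have RB: "\<bar>R j\<bar> \<le> B j" for j
    unfolding R_def using bound B(2)[of j] by auto
  then have "J - g k \<le> suminf B"
    by (intro sums_le[OF _ R_sums summable_sums[OF B(1)]]) (simp add: abs_le_iff)
  moreover have "- suminf B \<le> J - g k"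
    using RB by (intro sums_le[OF _ sums_minus[OF summable_sums[OF B(1)]] R_sums])
      (metis abs_le_iff minus_le_iff)
  ultimately show ?thesis by linarith
qed

text \<open>Integrate \<open>f(s) + f(-s)\<close> against \<open>(d - s) cos (l\<^sub>k s + p\<^sub>k)\<close> over \<open>[0, d]\<close>: the first order
  Taylor polynomial of \<open>f\<close> contributes nothing, the \<open>k\<close>-th term of the series \<open>c\<^sub>k d\<^sup>2 / 2\<close>, and
  \<open>B\<close> majorises the other terms.\<close>

lemma cos_series_coeff_le:
  fixes c l p B :: "nat \<Rightarrow> real" and f :: "real \<Rightarrow> real"
  assumes c0: "\<And>j. c j \<ge> 0" and cs: "summable c"
    and f: "\<And>s. f s = (\<Sum>j. c j * cos (l j * s + p j))"
    and l_nonneg: "\<And>j. c j \<noteq> 0 \<Longrightarrow> l j \<ge> 0"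
    and d: "d > 0" and lk: "l k > 0" and period: "l k * d = 2 * pi * real N"
    and remainder: "\<And>s. \<bar>s\<bar> \<le> d \<Longrightarrow> \<bar>f s - f 0 - D * s\<bar> \<le> e * \<bar>s\<bar>"
    and B: "\<And>j. j \<noteq> k \<Longrightarrow> c j \<noteq> 0 \<Longrightarrow> l j \<noteq> l k \<and> c j * (4 / (l j - l k)\<^sup>2) \<le> B j"
    and B0: "\<And>j. B j \<ge> 0" and Bs: "summable B"
  shows "c k * d\<^sup>2 / 2 \<le> e * d ^ 3 / 3 + suminf B"
proof -
  define ck where "ck s = cos (l k * s + p k)" for s
  define X where "X s = (f s - f 0 - D * s) * ck s + (f (- s) - f 0 - D * - s) * ck (- s)" for s
  define Q where "Q j = (tri_cos_integral d (l j - l k) (p j - p k)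
      + tri_cos_integral d (l j + l k) (p j + p k)) / 2" for j
  obtain J where cQ: "(\<lambda>j. c j * Q j) sums J"
    and J: "((\<lambda>s. (d - s) * (f s * ck s + f (- s) * ck (- s))) has_integral J) {0..d}"
    using has_integral_tri_cos_series[OF c0 cs _ f, of d "l k" "p k"] d unfolding Q_def ck_def by auto
  from has_integral_diff[OF J has_integral_tri_linear_0[of d "l k" N "f 0" D "p k"]] d lk period
  have "((\<lambda>s. (d - s) * X s) has_integral J) {0..d}"
    unfolding X_def ck_def by (simp add: algebra_simps)
  moreover have "\<bar>(d - s) * X s\<bar> \<le> 2 * e * ((d - s) * s)" if s: "s \<in> {0..d}" for s
  proof -
    have "\<bar>(f s - f 0 - D * s) * ck s\<bar> \<le> e * s" "\<bar>(f (- s) - f 0 - D * - s) * ck (- s)\<bar> \<le> e * s"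
      using remainder[of s] remainder[of "- s"] s
      by (auto simp: abs_mult ck_def intro: order_trans[OF mult_right_le_one_le])
    then have "\<bar>X s\<bar> \<le> 2 * e * s"
      unfolding X_def by linarith
    then have "(d - s) * \<bar>X s\<bar> \<le> (d - s) * (2 * e * s)"
      using s by (intro mult_left_mono) auto
    moreover have "\<bar>(d - s) * X s\<bar> = (d - s) * \<bar>X s\<bar>"
      using s by (simp add: abs_mult)
    ultimately show ?thesis
      by (simp add: algebra_simps)
  qed
  ultimately have J_le: "\<bar>J\<bar> \<le> e * d ^ 3 / 3"
    using d by (intro has_integral_tri_le) auto
  have "\<bar>c j * Q j\<bar> \<le> B j" if "j \<noteq> k" for j
  proof (cases "c j = 0")
    case False
    with B that have "l j \<noteq> l k" "c j * (4 / (l j - l k)\<^sup>2) \<le> B j" by auto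
    moreover from this(1) have "\<bar>Q j\<bar> \<le> 4 / (l j - l k)\<^sup>2"
      unfolding Q_def using False l_nonneg lk by (intro abs_tri_cos_pair_le) auto
    then have "c j * \<bar>Q j\<bar> \<le> c j * (4 / (l j - l k)\<^sup>2)"
      using c0[of j] by (intro mult_left_mono)
    ultimately show ?thesis
      using c0[of j] by (simp add: abs_mult)
  qed (simp add: B0)
  with cQ B0 Bs have "\<bar>J - c k * Q k\<bar> \<le> suminf B"
    by (intro abs_sums_minus_term_le) auto
  moreover have "Q k = d\<^sup>2 / 2"
    using tri_cos_integral_eq_0[of "l k + l k" d "2 * N"] lk period
    unfolding Q_def tri_cos_integral_def by (simp add: algebra_simps)
  ultimately have "c k * d\<^sup>2 / 2 \<le> J + suminf B"
    by (simp add: abs_le_iff)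
  then show ?thesis
    using J_le abs_ge_self[of J] by linarith
qed

definition inv_sq_gap :: "nat \<Rightarrow> nat \<Rightarrow> real" where
  "inv_sq_gap k j = (if j = k then 0 else 1 / (real j - real k)\<^sup>2)"

lemma inv_sq_gap_nonneg: "inv_sq_gap k j \<ge> 0"
  by (simp add: inv_sq_gap_def)

lemma summable_inv_sq_gap: "summable (inv_sq_gap k)"
  and suminf_inv_sq_gap_le: "suminf (inv_sq_gap k) \<le> pi\<^sup>2 / 3"
proof -
  have "(\<lambda>i. inv_sq_gap k (i + Suc k)) = (\<lambda>i. 1 / (real i + 1)\<^sup>2)"
    by (auto simp: inv_sq_gap_def)
  then have tail: "(\<lambda>i. inv_sq_gap k (i + Suc k)) sums (pi\<^sup>2 / 6)"
    using inverse_squares_sums by (simp add: add.commute)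
  then show summable: "summable (inv_sq_gap k)"
    using summable_iff_shift sums_summable by blast
  have "(\<Sum>i<Suc k. inv_sq_gap k i) = (\<Sum>i<k. 1 / (real k - real i)\<^sup>2)"
    by (auto simp: inv_sq_gap_def power2_commute intro!: sum.cong)
  also have "\<dots> = (\<Sum>i<k. 1 / (real i + 1)\<^sup>2)"
    by (subst sum.nat_diff_reindex[symmetric]) (auto simp: of_nat_diff intro!: sum.cong)
  also have "\<dots> \<le> pi\<^sup>2 / 6"
    using sum_le_suminf[OF sums_summable[OF inverse_squares_sums], of "{..<k}"] inverse_squares_sums
    by (simp add: sums_iff add.commute)
  finally show "suminf (inv_sq_gap k) \<le> pi\<^sup>2 / 3"
    using suminf_split_initial_segment[OF summable, of "Suc k"] sums_unique[OF tail] by simp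
qed

section \<open>The weight \<open>Log\<^sub>1 \<cdots> Log\<^sub>n\<^sup>a\<close>\<close>

locale log_weight =
  fixes n :: nat and a :: real
  assumes n_ge_2: "n \<ge> 2" and a_gt_1: "a > 1"
begin

lemma iterlog_pos_le_n: "x > Etow (n - 1) \<Longrightarrow> i \<le> n \<Longrightarrow> iterlog i x > 0"
  using iterlog_pos[of "n - 1" x i] n_ge_2 by simp

lemma iterlog_nonneg_le_n: "x > Etow (n - 1) \<Longrightarrow> i \<le> n - 1 \<Longrightarrow> iterlog i x \<ge> 0"
  using iterlog_pos_le_n[of x i] by force

lemma prod_iterlog_nonneg: "x > Etow (n - 1) \<Longrightarrow> (\<Prod>k\<in>{1..n - 1}. iterlog k x) \<ge> 0"
  by (intro prod_nonneg) (auto intro: iterlog_nonneg_le_n)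

lemma logweight_pos:
  assumes "x > Etow (n - 1)"
  shows "logweight n a x > 0"
proof -
  have "iterlog i x > 0" if "i \<le> n" for i
    using iterlog_pos_le_n[OF assms that] .
  then show ?thesis
    unfolding logweight_def using n_ge_2 by (intro mult_pos_pos prod_pos) force+
qed

lemma logweight_mono:
  assumes x: "x > Etow (n - 1)" and xy: "x \<le> y"
  shows "logweight n a x \<le> logweight n a y"
proof -
  have mono: "iterlog i x \<le> iterlog i y" if "i \<le> n" for i
    using iterlog_mono[OF x xy, of i] that n_ge_2 by simp
  have "(\<Prod>k\<in>{1..n - 1}. iterlog k x) \<le> (\<Prod>k\<in>{1..n - 1}. iterlog k y)"
    by (intro prod_mono) (auto intro: iterlog_nonneg_le_n[OF x] mono)
  moreover have "iterlog n x powr a \<le> iterlog n y powr a"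
    using mono[of n] iterlog_pos_le_n[OF x, of n] a_gt_1 by (intro powr_mono2) auto
  moreover have "y > Etow (n - 1)"
    using x xy by simp
  ultimately show ?thesis
    unfolding logweight_def using prod_iterlog_nonneg by (intro mult_mono) auto
qed

lemma logweight_double_le:
  assumes y: "y \<ge> Etow n"
  shows "logweight n a (2 * y) \<le> 2 ^ (n - 1) * 2 powr a * logweight n a y"
proof -
  have y_gt: "y > Etow (n - 1)"
    using y Etow_less_Suc[of "n - 1"] n_ge_2 by simp
  then have y2_gt: "2 * y > Etow (n - 1)"
    using Etow_ge_1[of "n - 1"] by simp
  have double: "iterlog i (2 * y) \<le> 2 * iterlog i y" if "1 \<le> i" "i \<le> n" for i
  proof -
    have "iterlog i y \<ge> Etow (n - i)"
      using iterlog_ge_Etow[OF y] that by simp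
    then have "iterlog i y \<ge> 1"
      using Etow_ge_1[of "n - i"] by linarith
    moreover have "ln (2::real) \<le> 1"
      using ln_le_minus_one[of 2] by simp
    ultimately show ?thesis
      using iterlog_double_le[OF y that] by simp
  qed
  have "(\<Prod>k\<in>{1..n - 1}. iterlog k (2 * y)) \<le> (\<Prod>k\<in>{1..n - 1}. 2 * iterlog k y)"
    by (intro prod_mono) (auto intro: iterlog_nonneg_le_n[OF y2_gt] double)
  also have "\<dots> = 2 ^ (n - 1) * (\<Prod>k\<in>{1..n - 1}. iterlog k y)"
    by (simp add: prod.distrib)
  finally have prod_le:
    "(\<Prod>k\<in>{1..n - 1}. iterlog k (2 * y)) \<le> 2 ^ (n - 1) * (\<Prod>k\<in>{1..n - 1}. iterlog k y)" .
  have "iterlog n (2 * y) powr a \<le> (2 * iterlog n y) powr a"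
    using double[of n] n_ge_2 iterlog_pos_le_n[OF y2_gt, of n] a_gt_1 by (intro powr_mono2) auto
  also have "\<dots> = 2 powr a * iterlog n y powr a"
    using iterlog_pos_le_n[OF y_gt, of n] by (simp add: powr_mult)
  finally have powr_le: "iterlog n (2 * y) powr a \<le> 2 powr a * iterlog n y powr a" .
  have "logweight n a (2 * y)
      \<le> (2 ^ (n - 1) * (\<Prod>k\<in>{1..n - 1}. iterlog k y)) * (2 powr a * iterlog n y powr a)"
    unfolding logweight_def using prod_iterlog_nonneg[OF y_gt] prod_iterlog_nonneg[OF y2_gt]
    by (intro mult_mono prod_le powr_le) auto
  then show ?thesis
    unfolding logweight_def by (simp add: algebra_simps)
qed

lemma logweight_le_ln_powr:
  assumes x: "x > Etow (n - 1)"
  shows "logweight n a x \<le> ln x powr (real (n - 1) + a)"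
proof -
  have x_gt_1: "x > 1"
    using x Etow_ge_1[of "n - 1"] by linarith
  have le_ln: "iterlog i x \<le> ln x" if "1 \<le> i" "i \<le> n" for i
    using iterlog_le_ln[OF x, of i] that n_ge_2 by simp
  have "(\<Prod>k\<in>{1..n - 1}. iterlog k x) \<le> (\<Prod>k\<in>{1..n - 1}. ln x)"
    by (intro prod_mono) (auto intro: iterlog_nonneg_le_n[OF x] le_ln)
  moreover have "iterlog n x powr a \<le> ln x powr a"
    using le_ln[of n] n_ge_2 iterlog_pos_le_n[OF x, of n] a_gt_1 by (intro powr_mono2) auto
  ultimately have "logweight n a x \<le> ln x ^ (n - 1) * ln x powr a"
    unfolding logweight_def using x_gt_1 by (intro mult_mono) auto
  also have "\<dots> = ln x powr (real (n - 1) + a)"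
    using x_gt_1 by (simp add: powr_add powr_realpow)
  finally show ?thesis .
qed

definition denom :: "real \<Rightarrow> real" where
  "denom x = x * logweight n a x"

definition doubling_const :: real where
  "doubling_const = 2 ^ n * 2 powr a"

lemma doubling_const_ge_1: "doubling_const \<ge> 1"
proof -
  have "(1::real) * 1 \<le> 2 ^ n * 2 powr a"
    using a_gt_1 by (intro mult_mono) (auto simp: ge_one_powr_ge_zero)
  then show ?thesis
    unfolding doubling_const_def by simp
qed

lemma denom_pos: "x > Etow (n - 1) \<Longrightarrow> denom x > 0"
  unfolding denom_def using logweight_pos Etow_ge_1[of "n - 1"] by simp

lemma denom_mono: "x > Etow (n - 1) \<Longrightarrow> x \<le> y \<Longrightarrow> denom x \<le> denom y"
  unfolding denom_def using logweight_mono logweight_pos Etow_ge_1[of "n - 1"]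
  by (intro mult_mono) (auto intro: less_imp_le)

lemma denom_double_le:
  assumes y: "y \<ge> Etow n" and yz: "y \<le> z"
  shows "denom (2 * y) \<le> doubling_const * denom z"
proof -
  have y_gt: "y > Etow (n - 1)"
    using y Etow_less_Suc[of "n - 1"] n_ge_2 by simp
  have "denom (2 * y) \<le> 2 * y * (2 ^ (n - 1) * 2 powr a * logweight n a y)"
    unfolding denom_def using logweight_double_le[OF y] y_gt Etow_ge_1[of "n - 1"]
    by (intro mult_left_mono) auto
  also have "\<dots> = doubling_const * denom y"
    unfolding doubling_const_def denom_def using n_ge_2
    by (simp add: power_eq_if[of 2 n] algebra_simps)
  also have "\<dots> \<le> doubling_const * denom z"
    using denom_mono[OF y_gt yz] doubling_const_ge_1 by simp
  finally show ?thesis .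
qed

definition primitive :: "real \<Rightarrow> real" where
  "primitive x = - (iterlog n x powr (1 - a)) / (a - 1)"

lemma has_real_derivative_primitive:
  assumes x: "x > Etow (n - 1)"
  shows "(primitive has_real_derivative 1 / denom x) (at x)"
proof -
  have L: "iterlog n x > 0"
    using iterlog_pos_le_n[OF x] by simp
  have "{..<n} = insert 0 {1..n - 1}"
    using n_ge_2 by auto
  then have prod_eq: "(\<Prod>i<n. iterlog i x) = x * (\<Prod>i\<in>{1..n - 1}. iterlog i x)"
    by simp
  have "(iterlog n has_real_derivative 1 / (\<Prod>i<n. iterlog i x)) (at x)"
    using has_real_derivative_iterlog[OF x] n_ge_2 by simp
  from DERIV_chain2[OF has_real_derivative_powr[OF L] this]
  have "((\<lambda>x. iterlog n x powr (1 - a)) has_real_derivative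
      (1 - a) * iterlog n x powr (1 - a - 1) * (1 / (\<Prod>i<n. iterlog i x))) (at x)" .
  from DERIV_cdivide[OF DERIV_minus[OF this], of "a - 1"]
  have "(primitive has_real_derivative iterlog n x powr (- a) / (\<Prod>i<n. iterlog i x)) (at x)"
    unfolding primitive_def using a_gt_1 by (simp add: minus_diff_eq[of a 1, symmetric] del: minus_diff_eq)
  moreover have "x > 0" "(\<Prod>i\<in>{1..n - 1}. iterlog i x) > 0" "a - 1 \<noteq> 0"
    using x Etow_ge_1[of "n - 1"] a_gt_1 iterlog_pos_le_n[OF x] by (auto intro!: prod_pos)
  moreover have "iterlog n x powr a > 0"
    using L by simp
  then have "iterlog n x powr (- a) / (\<Prod>i<n. iterlog i x) = 1 / denom x"
    unfolding prod_eq denom_def logweight_def by (simp add: powr_minus field_simps)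
  ultimately show ?thesis by simp
qed

lemma primitive_nonpos: "primitive x \<le> 0"
  unfolding primitive_def using a_gt_1 by simp

definition amp :: "nat \<Rightarrow> real" where
  "amp j = (if real j > Etow (n - 1) then 1 / denom (real j) else 0)"

definition freq :: "nat \<Rightarrow> real" where
  "freq j = real j * denom (real j)"

lemma amp_eq: "real j > Etow (n - 1) \<Longrightarrow> amp j = 1 / denom (real j)"
  by (simp add: amp_def)

lemma amp_nonneg: "amp j \<ge> 0"
  unfolding amp_def using denom_pos[of "real j"] by auto

lemma amp_neq_0_imp_gt: "amp j \<noteq> 0 \<Longrightarrow> real j > Etow (n - 1)"
  unfolding amp_def by (auto split: if_splits)

lemma amp_le_primitive_diff:
  assumes j: "real j - 1 > Etow (n - 1)"
  shows "amp j \<le> primitive (real j) - primitive (real j - 1)"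
proof -
  obtain z where z: "real j - 1 < z" "z < real j"
    "primitive (real j) - primitive (real j - 1) = (real j - (real j - 1)) * (1 / denom z)"
    using MVT2[of "real j - 1" "real j" primitive "\<lambda>x. 1 / denom x"] has_real_derivative_primitive j
    by force
  have z_gt: "z > Etow (n - 1)"
    using z j by simp
  then have "1 / denom (real j) \<le> 1 / denom z"
    using denom_pos denom_mono[OF z_gt] z by (intro divide_left_mono) (auto intro: mult_pos_pos)
  then show ?thesis
    using amp_eq z j by simp
qed

lemma summable_amp: "summable amp"
proof -
  define j0 where "j0 = nat \<lceil>Etow (n - 1)\<rceil> + 2"
  define h where "h m = primitive (real (m + j0) - 1)" for m
  have "amp (m + j0) \<le> h (Suc m) - h m" for m
  proof -
    have "real (m + j0) - 1 > Etow (n - 1)"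
      unfolding j0_def by linarith
    from amp_le_primitive_diff[OF this] show ?thesis
      unfolding h_def by simp
  qed
  then have "(\<Sum>m<N. amp (m + j0)) \<le> - h 0" for N
    using sum_mono[of "{..<N}" "\<lambda>m. amp (m + j0)" "\<lambda>m. h (Suc m) - h m"]
      sum_lessThan_telescope[of h N] primitive_nonpos[of "real (N + j0) - 1"]
    unfolding h_def by simp
  then have "summable (\<lambda>m. amp (m + j0))"
    by (intro summableI_nonneg_bounded[where x = "- h 0"] amp_nonneg)
  then show ?thesis
    by (simp add: summable_iff_shift)
qed

lemma freq_pos: "real j > Etow (n - 1) \<Longrightarrow> freq j > 0"
  unfolding freq_def using denom_pos Etow_ge_1[of "n - 1"] by simp

lemma freq_mult_amp: "real j > Etow (n - 1) \<Longrightarrow> freq j * amp j = real j"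
  unfolding freq_def amp_def using denom_pos[of "real j"] by simp

lemma freq_gap_ge:
  assumes i: "real i > Etow (n - 1)" and ij: "i < j"
  shows "(real j - real i) * denom (real i) \<le> freq j - freq i"
proof -
  have "real j * denom (real i) \<le> real j * denom (real j)"
    using denom_mono[OF i] ij by (intro mult_left_mono) auto
  then show ?thesis
    unfolding freq_def by (simp add: algebra_simps)
qed

lemma freq_le_quarter:
  assumes j: "real j > Etow (n - 1)" and jk: "2 * j < k"
  shows "freq j \<le> freq k / 4"
proof -
  have "logweight n a (real j) \<le> logweight n a (real k)"
    using logweight_mono[OF j] jk by simp
  moreover have half: "real j \<le> real k / 2"
    using jk by linarith
  then have "real j * real j \<le> (real k / 2) * (real k / 2)"
    by (intro mult_mono) auto
  ultimately have "real j * real j * logweight n a (real j) \<le> (real k / 2) * (real k / 2) * logweight n a (real k)"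
    using logweight_pos[OF j] half by (intro mult_mono) auto
  then show ?thesis
    unfolding freq_def denom_def by (simp add: algebra_simps)
qed

section \<open>The series \<open>F\<^sub>n\<close>\<close>

lemma offdiag_above_le:
  assumes k: "real k > Etow (n - 1)" and kj: "k < j"
  shows "freq k < freq j" "amp j * (4 / (freq j - freq k)\<^sup>2) \<le> 4 * amp k ^ 3 * inv_sq_gap k j"
proof -
  have j: "real j > Etow (n - 1)"
    using k kj by simp
  define u where "u = denom (real k)"
  have u: "u > 0"
    unfolding u_def using denom_pos[OF k] .
  have gap: "(real j - real k) * u \<le> freq j - freq k"
    unfolding u_def using freq_gap_ge[OF k kj] .
  moreover have gap_pos: "(real j - real k) * u > 0"
    using kj u by simp
  ultimately show "freq k < freq j" by simp
  have "amp j \<le> 1 / u"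
    unfolding amp_eq[OF j] u_def using denom_mono[OF k] denom_pos[OF k] denom_pos[OF j] kj
    by (intro divide_left_mono) auto
  moreover have "4 / (freq j - freq k)\<^sup>2 \<le> 4 / ((real j - real k) * u)\<^sup>2"
    using gap gap_pos by (intro divide_left_mono power_mono mult_pos_pos) auto
  ultimately have "amp j * (4 / (freq j - freq k)\<^sup>2) \<le> 1 / u * (4 / ((real j - real k) * u)\<^sup>2)"
    using amp_nonneg u by (intro mult_mono) auto
  also have "\<dots> = 4 * amp k ^ 3 * inv_sq_gap k j"
    unfolding amp_eq[OF k] inv_sq_gap_def u_def[symmetric] using kj u
    by (simp add: field_simps power2_eq_square power3_eq_cube)
  finally show "amp j * (4 / (freq j - freq k)\<^sup>2) \<le> 4 * amp k ^ 3 * inv_sq_gap k j" .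
qed

lemma offdiag_near_le:
  assumes k: "real k \<ge> 2 * Etow n" and jk: "j < k" "real k \<le> 2 * real j"
  shows "freq j < freq k"
    "amp j * (4 / (freq j - freq k)\<^sup>2) \<le> 4 * doubling_const ^ 3 * amp k ^ 3 * inv_sq_gap k j"
proof -
  have j: "real j > Etow (n - 1)"
    using k jk Etow_less_Suc[of "n - 1"] n_ge_2 by simp
  have k': "real k > Etow (n - 1)"
    using j jk by simp
  define v where "v = denom (real j)"
  have v: "v > 0"
    unfolding v_def using denom_pos[OF j] .
  have gap: "(real k - real j) * v \<le> freq k - freq j"
    unfolding v_def using freq_gap_ge[OF j jk(1)] .
  moreover have gap_pos: "(real k - real j) * v > 0"
    using jk v by simp
  ultimately show "freq j < freq k" by simp
  have "denom (real k) \<le> doubling_const * v"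
    using denom_double_le[of "real k / 2" "real j"] k jk unfolding v_def by simp
  then have "1 / v \<le> doubling_const * amp k"
    unfolding amp_eq[OF k'] using v denom_pos[OF k'] by (simp add: field_simps)
  then have v3: "(1 / v) ^ 3 \<le> doubling_const ^ 3 * amp k ^ 3"
    using v by (metis power_mono power_mult_distrib zero_le_divide_1_iff less_imp_le)
  have "4 / (freq j - freq k)\<^sup>2 \<le> 4 / ((real k - real j) * v)\<^sup>2"
    using gap gap_pos by (subst power2_commute) (intro divide_left_mono power_mono mult_pos_pos, auto)
  then have "amp j * (4 / (freq j - freq k)\<^sup>2) \<le> 1 / v * (4 / ((real k - real j) * v)\<^sup>2)"
    unfolding amp_eq[OF j] v_def[symmetric] using v by (intro mult_left_mono) auto
  also have "\<dots> = 4 * (1 / v) ^ 3 * inv_sq_gap k j"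
    unfolding inv_sq_gap_def using jk v
    by (simp add: field_simps power2_eq_square power3_eq_cube)
  also have "\<dots> \<le> 4 * (doubling_const ^ 3 * amp k ^ 3) * inv_sq_gap k j"
    using v3 inv_sq_gap_nonneg by (intro mult_right_mono mult_left_mono) auto
  finally show "amp j * (4 / (freq j - freq k)\<^sup>2) \<le> 4 * doubling_const ^ 3 * amp k ^ 3 * inv_sq_gap k j"
    by (simp add: algebra_simps)
qed

lemma offdiag_far_le:
  assumes j: "real j > Etow (n - 1)" and jk: "2 * j < k"
  shows "freq j < freq k" "amp j * (4 / (freq j - freq k)\<^sup>2) \<le> 8 * amp j / (freq k)\<^sup>2"
proof -
  have k: "real k > Etow (n - 1)"
    using j jk by simp
  have gap: "3 / 4 * freq k \<le> freq k - freq j"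
    using freq_le_quarter[OF j jk] by simp
  moreover have gap_pos: "3 / 4 * freq k > 0"
    using freq_pos[OF k] by simp
  ultimately show "freq j < freq k" by simp
  have "4 / (freq j - freq k)\<^sup>2 \<le> 4 / (3 / 4 * freq k)\<^sup>2"
    using gap gap_pos by (subst power2_commute) (intro divide_left_mono power_mono mult_pos_pos, auto)
  then have "amp j * (4 / (freq j - freq k)\<^sup>2) \<le> amp j * (4 / (3 / 4 * freq k)\<^sup>2)"
    using amp_nonneg by (intro mult_left_mono)
  also have "\<dots> \<le> 8 * amp j / (freq k)\<^sup>2"
    using freq_pos[OF k] amp_nonneg[of j] by (simp add: field_simps power2_eq_square)
  finally show "amp j * (4 / (freq j - freq k)\<^sup>2) \<le> 8 * amp j / (freq k)\<^sup>2" .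
qed

definition offdiag_bound :: "nat \<Rightarrow> nat \<Rightarrow> real" where
  "offdiag_bound k j = 8 * amp j / (freq k)\<^sup>2 + 4 * doubling_const ^ 3 * amp k ^ 3 * inv_sq_gap k j"

lemma offdiag_bound_nonneg: "offdiag_bound k j \<ge> 0"
  unfolding offdiag_bound_def using amp_nonneg inv_sq_gap_nonneg doubling_const_ge_1 by simp

lemma offdiag_le_bound:
  assumes k: "real k \<ge> 2 * Etow n" and j: "j \<noteq> k" "amp j \<noteq> 0"
  shows "freq j \<noteq> freq k \<and> amp j * (4 / (freq j - freq k)\<^sup>2) \<le> offdiag_bound k j"
proof -
  have j_gt: "real j > Etow (n - 1)"
    using amp_neq_0_imp_gt j by blast
  have k_gt: "real k > Etow (n - 1)"
    using k Etow_less_Suc[of "n - 1"] Etow_ge_1[of n] n_ge_2 by simp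
  have "1 * (4 * amp k ^ 3 * inv_sq_gap k j) \<le> doubling_const ^ 3 * (4 * amp k ^ 3 * inv_sq_gap k j)"
    using doubling_const_ge_1 amp_nonneg[of k] inv_sq_gap_nonneg[of k j]
    by (intro mult_right_mono one_le_power) auto
  moreover have "8 * amp j / (freq k)\<^sup>2 \<ge> 0" "4 * amp k ^ 3 * inv_sq_gap k j \<ge> 0"
    using amp_nonneg[of j] amp_nonneg[of k] inv_sq_gap_nonneg[of k j] by simp_all
  ultimately have parts: "8 * amp j / (freq k)\<^sup>2 \<le> offdiag_bound k j"
    "4 * doubling_const ^ 3 * amp k ^ 3 * inv_sq_gap k j \<le> offdiag_bound k j"
    "4 * amp k ^ 3 * inv_sq_gap k j \<le> offdiag_bound k j"
    unfolding offdiag_bound_def by (simp_all add: algebra_simps)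
  consider (above) "k < j" | (near) "j < k" "real k \<le> 2 * real j" | (far) "2 * j < k"
    using j by linarith
  then show ?thesis
  proof cases
    case above
    then show ?thesis
      using offdiag_above_le[OF k_gt above] parts(3) by (metis order_trans order_less_irrefl)
  next
    case near
    then show ?thesis
      using offdiag_near_le[OF k near] parts(2) by (metis order_trans order_less_irrefl)
  next
    case far
    then show ?thesis
      using offdiag_far_le[OF j_gt far] parts(1) by (metis order_trans order_less_irrefl)
  qed
qed

lemma summable_offdiag_bound: "summable (offdiag_bound k)"
  unfolding offdiag_bound_def
  by (intro summable_add summable_mult summable_divide summable_amp summable_inv_sq_gap)

lemma suminf_offdiag_bound_le:
  assumes k: "real k > Etow (n - 1)" and large: "8 * suminf amp * logweight n a (real k) \<le> real k"
  shows "suminf (offdiag_bound k) \<le> (1 + 24 * doubling_const ^ 3) * amp k ^ 3"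
proof -
  have w: "logweight n a (real k) > 0" and k_pos: "real k > 0"
    using logweight_pos[OF k] k Etow_ge_1[of "n - 1"] by auto
  have "suminf (offdiag_bound k)
      = 8 * suminf amp / (freq k)\<^sup>2 + 4 * doubling_const ^ 3 * amp k ^ 3 * suminf (inv_sq_gap k)"
    unfolding offdiag_bound_def
    by (intro sums_unique[symmetric] sums_add sums_mult sums_divide summable_sums summable_amp
        summable_inv_sq_gap)
  also have "8 * suminf amp / (freq k)\<^sup>2 \<le> amp k ^ 3"
  proof -
    have "8 * suminf amp / (freq k)\<^sup>2 \<le> real k / logweight n a (real k) / (freq k)\<^sup>2"
      using large w by (intro divide_right_mono) (auto simp: field_simps)
    also have "\<dots> = amp k ^ 3"
      unfolding amp_eq[OF k] freq_def denom_def using w k_pos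
      by (simp add: field_simps power2_eq_square power3_eq_cube)
    finally show ?thesis .
  qed
  also have "4 * doubling_const ^ 3 * amp k ^ 3 * suminf (inv_sq_gap k)
      \<le> 4 * doubling_const ^ 3 * amp k ^ 3 * 6"
  proof -
    have "pi\<^sup>2 \<le> 4\<^sup>2"
      using pi_less_4 pi_gt_zero by (intro power_mono) auto
    then have "suminf (inv_sq_gap k) \<le> 6"
      using suminf_inv_sq_gap_le[of k] by simp
    then show ?thesis
      using amp_nonneg[of k] doubling_const_ge_1 by (intro mult_left_mono) auto
  qed
  finally show ?thesis
    by (simp add: algebra_simps)
qed

lemma eventually_index_large:
  "\<forall>\<^sub>F k in sequentially. 2 * Etow n \<le> real k \<and> 8 * suminf amp * logweight n a (real k) \<le> real k"
proof -
  define b where "b = real (n - 1) + a"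
  have b: "b > 0"
    unfolding b_def using a_gt_1 by simp
  have "\<forall>\<^sub>F x in at_top. C * ln x powr b \<le> (x::real)" for C
    using b by real_asymp
  then have "\<forall>\<^sub>F x in at_top. 2 * Etow n \<le> x \<and> 8 * suminf amp * ln x powr b \<le> (x::real)"
    by (intro eventually_conj eventually_ge_at_top)
  then have "\<forall>\<^sub>F k in sequentially. 2 * Etow n \<le> real k \<and> 8 * suminf amp * ln (real k) powr b \<le> real k"
    by (rule eventually_compose_filterlim[OF _ filterlim_real_sequentially])
  then show ?thesis
  proof (rule eventually_mono, safe)
    fix k assume k: "2 * Etow n \<le> real k" and large: "8 * suminf amp * ln (real k) powr b \<le> real k"
    then have "real k > Etow (n - 1)"
      using Etow_less_Suc[of "n - 1"] Etow_ge_1[of n] n_ge_2 by simp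
    then have "logweight n a (real k) \<le> ln (real k) powr b"
      unfolding b_def by (rule logweight_le_ln_powr)
    then have "8 * suminf amp * logweight n a (real k) \<le> 8 * suminf amp * ln (real k) powr b"
      using suminf_nonneg[OF summable_amp amp_nonneg] by (intro mult_left_mono) auto
    with large show "8 * suminf amp * logweight n a (real k) \<le> real k"
      by linarith
  qed
qed

lemma linear_approx_error_bound:
  fixes M :: nat
  assumes k: "2 * Etow n \<le> real k" "8 * suminf amp * logweight n a (real k) \<le> real k"
    and M: "M > 0"
    and approx: "\<And>s. \<bar>s\<bar> \<le> 2 * pi * real M * amp k \<Longrightarrow>
      \<bar>(\<Sum>j. amp j * cos (freq j * (t\<^sub>0 + s) + \<phi>)) - (\<Sum>j. amp j * cos (freq j * t\<^sub>0 + \<phi>)) - D * s\<bar>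
        \<le> e * \<bar>s\<bar>"
  shows "2 * pi\<^sup>2 * real M ^ 2 \<le> 8 * pi ^ 3 * real M ^ 3 * e / 3 + 1 + 24 * doubling_const ^ 3"
proof -
  have k_gt: "real k > Etow (n - 1)"
    using k Etow_less_Suc[of "n - 1"] Etow_ge_1[of n] n_ge_2 by simp
  define x where "x = amp k"
  have x: "x > 0"
    unfolding x_def amp_eq[OF k_gt] using denom_pos[OF k_gt] by simp
  define d where "d = 2 * pi * real M * x"
  define f where "f s = (\<Sum>j. amp j * cos (freq j * (t\<^sub>0 + s) + \<phi>))" for s
  have "x * d\<^sup>2 / 2 \<le> e * d ^ 3 / 3 + suminf (offdiag_bound k)"
    unfolding x_def
  proof (rule cos_series_coeff_le[where c = amp and l = freq and k = k and f = f
        and p = "\<lambda>j. freq j * t\<^sub>0 + \<phi>" and N = "M * k" and B = "offdiag_bound k",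
        OF amp_nonneg summable_amp _ _ _ freq_pos[OF k_gt]])
    show "f s = (\<Sum>j. amp j * cos (freq j * s + (freq j * t\<^sub>0 + \<phi>)))" for s
      unfolding f_def by (simp add: algebra_simps)
    show "amp j \<noteq> 0 \<Longrightarrow> freq j \<ge> 0" for j
      using amp_neq_0_imp_gt freq_pos less_imp_le by blast
    show "d > 0"
      unfolding d_def using x M by simp
    show "freq k * d = 2 * pi * real (M * k)"
      unfolding d_def x_def using freq_mult_amp[OF k_gt] by (simp add: algebra_simps)
    show "\<bar>f s - f 0 - D * s\<bar> \<le> e * \<bar>s\<bar>" if "\<bar>s\<bar> \<le> d" for s
      unfolding f_def using approx[of s] that unfolding d_def x_def by simp
  qed (use offdiag_le_bound[OF k(1)] offdiag_bound_nonneg summable_offdiag_bound in auto)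
  also have "\<dots> \<le> e * d ^ 3 / 3 + (1 + 24 * doubling_const ^ 3) * x ^ 3"
    using suminf_offdiag_bound_le[OF k_gt k(2)] unfolding x_def by simp
  finally have "2 * pi\<^sup>2 * real M ^ 2 * x ^ 3
      \<le> (8 * pi ^ 3 * real M ^ 3 * e / 3 + 1 + 24 * doubling_const ^ 3) * x ^ 3"
    unfolding d_def by (simp add: algebra_simps power2_eq_square power3_eq_cube)
  then show ?thesis
    using x by simp
qed

lemma not_differentiable_cos_series:
  "\<not> (\<lambda>t. \<Sum>j. amp j * cos (freq j * t + \<phi>)) differentiable (at t\<^sub>0)"
proof
  assume "(\<lambda>t. \<Sum>j. amp j * cos (freq j * t + \<phi>)) differentiable (at t\<^sub>0)"
  then obtain D where D: "((\<lambda>t. \<Sum>j. amp j * cos (freq j * t + \<phi>)) has_real_derivative D) (at t\<^sub>0)"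
    unfolding real_differentiable_def by blast
  define C where "C = doubling_const ^ 3"
  have C: "C \<ge> 1"
    unfolding C_def using doubling_const_ge_1 by (simp add: one_le_power)
  define M :: nat where "M = nat \<lceil>24 * C + 3\<rceil>"
  have M: "real M \<ge> 24 * C + 3"
    unfolding M_def by linarith
  define e where "e = 3 / (8 * pi ^ 3 * real M ^ 3)"
  have "e > 0"
    unfolding e_def using M C by simp
  obtain d\<^sub>0 where d\<^sub>0: "d\<^sub>0 > 0" "\<And>s. \<bar>s\<bar> \<le> d\<^sub>0 \<Longrightarrow>
      \<bar>(\<Sum>j. amp j * cos (freq j * (t\<^sub>0 + s) + \<phi>)) - (\<Sum>j. amp j * cos (freq j * t\<^sub>0 + \<phi>)) - D * s\<bar>
        \<le> e * \<bar>s\<bar>"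
    using has_real_derivative_remainder_le[OF D \<open>e > 0\<close>] by blast
  have "\<forall>\<^sub>F k in sequentially. amp k < d\<^sub>0 / (2 * pi * real M)"
    using summable_LIMSEQ_zero[OF summable_amp] d\<^sub>0 M C by (intro order_tendstoD) auto
  then obtain k where k: "2 * Etow n \<le> real k" "8 * suminf amp * logweight n a (real k) \<le> real k"
    and small: "amp k < d\<^sub>0 / (2 * pi * real M)"
    using eventually_happens'[OF _ eventually_conj[OF eventually_index_large]] by auto
  have "2 * pi\<^sup>2 * real M ^ 2 \<le> 8 * pi ^ 3 * real M ^ 3 * e / 3 + 1 + 24 * C"
    unfolding C_def
  proof (rule linear_approx_error_bound[OF k])
    show "M > 0"
      using M C by simp
    show "\<bar>s\<bar> \<le> 2 * pi * real M * amp k \<Longrightarrow> \<bar>(\<Sum>j. amp j * cos (freq j * (t\<^sub>0 + s) + \<phi>))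
        - (\<Sum>j. amp j * cos (freq j * t\<^sub>0 + \<phi>)) - D * s\<bar> \<le> e * \<bar>s\<bar>" for s
      using d\<^sub>0(2)[of s] small M C by (simp add: field_simps)
  qed
  also have "\<dots> = 2 + 24 * C"
    unfolding e_def using M C by simp
  finally have "2 * pi\<^sup>2 * real M ^ 2 \<le> 2 + 24 * C" .
  moreover have "2 * 9 * real M \<le> 2 * pi\<^sup>2 * real M ^ 2"
  proof -
    have "9 \<le> pi\<^sup>2"
      using power_mono[of 3 pi 2] pi_gt3 by simp
    moreover have "real M \<le> real M ^ 2"
      using M C by (simp add: power2_eq_square)
    ultimately show ?thesis
      by (intro mult_left_mono mult_mono) auto
  qed
  ultimately show False
    using M C by linarith
qed

lemma norm_amp_cis: "norm (complex_of_real (amp j) * cis x) = amp j"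
  using amp_nonneg[of j] by (simp add: norm_mult)

lemma summable_amp_cis: "summable (\<lambda>j. complex_of_real (amp j) * cis (t * freq j))"
  by (rule summable_norm_cancel) (simp add: norm_amp_cis summable_amp)

lemma Fser_eq_suminf: "Fser n a t = (\<Sum>j. complex_of_real (amp j) * cis (t * freq j))"
proof -
  have "Fser n a t = infsum (\<lambda>j. complex_of_real (amp j) * cis (t * freq j)) UNIV"
    unfolding Fser_def
    by (rule infsum_cong_neutral)
      (auto simp: amp_def freq_def denom_def power2_eq_square divide_inverse of_real_inverse ac_simps)
  also have "\<dots> = (\<Sum>j. complex_of_real (amp j) * cis (t * freq j))"
    by (intro infsumI norm_summable_imp_has_sum summable_sums summable_amp_cis)
      (simp add: norm_amp_cis summable_amp)
  finally show ?thesis .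
qed

lemma Re_Fser: "(\<lambda>t. Re (Fser n a t)) = (\<lambda>t. \<Sum>j. amp j * cos (freq j * t + 0))"
  unfolding Fser_eq_suminf Re_suminf[OF summable_amp_cis] by (simp add: mult.commute)

lemma Im_Fser: "(\<lambda>t. Im (Fser n a t)) = (\<lambda>t. \<Sum>j. amp j * cos (freq j * t + - (pi / 2)))"
  unfolding Fser_eq_suminf Im_suminf[OF summable_amp_cis] by (simp add: mult.commute cos_diff)

lemma continuous_on_Fser: "continuous_on UNIV (Fser n a)"
proof -
  have "uniform_limit UNIV (\<lambda>N t. \<Sum>j<N. complex_of_real (amp j) * cis (t * freq j))
      (\<lambda>t. \<Sum>j. complex_of_real (amp j) * cis (t * freq j)) sequentially"
    by (rule Weierstrass_m_test) (auto simp: norm_amp_cis summable_amp)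
  then have "continuous_on UNIV (\<lambda>t. \<Sum>j. complex_of_real (amp j) * cis (t * freq j))"
    by (rule uniform_limit_theorem[rotated]) (auto intro!: always_eventually continuous_intros)
  then show ?thesis
    by (simp add: Fser_eq_suminf)
qed

end

theorem mainTheorem12:
  fixes n :: nat and a :: real
  assumes "n \<ge> 2" and "a > 1"
  shows "continuous_on UNIV (Fser n a)
       \<and> continuous_on UNIV (\<lambda>t. Re (Fser n a t))
       \<and> continuous_on UNIV (\<lambda>t. Im (Fser n a t))
       \<and> (\<forall>t::real. \<not> (Fser n a differentiable (at t)))
       \<and> (\<forall>t::real. \<not> ((\<lambda>s. Re (Fser n a s)) differentiable (at t)))
       \<and> (\<forall>t::real. \<not> ((\<lambda>s. Im (Fser n a s)) differentiable (at t)))"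
proof -
  interpret log_weight n a
    using assms by unfold_locales
  have Re_nondiff: "\<not> (\<lambda>s. Re (Fser n a s)) differentiable (at t)" for t
    unfolding Re_Fser by (rule not_differentiable_cos_series)
  have Im_nondiff: "\<not> (\<lambda>s. Im (Fser n a s)) differentiable (at t)" for t
    unfolding Im_Fser by (rule not_differentiable_cos_series)
  have "\<not> Fser n a differentiable (at t)" for t
  proof
    assume "Fser n a differentiable (at t)"
    then have "(Re \<circ> Fser n a) differentiable (at t)"
      using differentiable_chain_at bounded_linear_imp_differentiable[OF bounded_linear_Re] by blast
    with Re_nondiff show False
      by (simp add: o_def)
  qed
  with Re_nondiff Im_nondiff continuous_on_Fser show ?thesis
    by (auto intro: continuous_on_Re continuous_on_Im)
qed

end
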